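(* Let $(x_i,v_i)_{i=1}^N$ be differentiable functions of $t$ (on some time interval) with values in $\mathbb{R}^3$, satisfying $\dot x_i=v_i$ for all $i\in\{1,\dots,N\}$. Assume that, for all $i,j\in\{1,\dots,N\}$ and all times considered, $$\|x_i\|=1,\quad \langle v_i,x_i\rangle=0,\quad \|v_i\|\le\mathcal{V}_{max},\quad x_i+x_j\ne0.$$ Then, for a positive constant $C$ independent of $t$, $$\bigg\|\frac{d}{dt}\Big[\frac{1}{1+\langle x_i,x_j\rangle}(x_i\times x_j)(x_i\times x_j)^T\Big]\bigg\|\le\frac{C}{\|x_i+x_j\|}\mathcal{V}_{max}.$$
   Context: $\|\cdot\|$ is the Euclidean norm on vectors and the induced matrix norm on $3\times3$ matrices; $\times$ is the cross product; vectors are columns; $\mathcal{V}_{max}\ge0$ is a constant. *)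

theory Defs
  imports "HOL-Analysis.Analysis"
begin

definition outer3 :: "real^3 \<Rightarrow> real^3 \<Rightarrow> real^3^3" where
  "outer3 u w = (\<chi> a b. u $ a * w $ b)"

definition matnorm3 :: "real^3^3 \<Rightarrow> real" where
  "matnorm3 A = onorm (\<lambda>y. A *v y)"

definition Pmat :: "real^3 \<Rightarrow> real^3 \<Rightarrow> real^3^3" where
  "Pmat x y = (1 / (1 + x \<bullet> y)) *\<^sub>R outer3 (cross3 x y) (cross3 x y)"

end

theory Submission imports Defs
begin

text \<open>For unit vectors \<open>x\<close>, \<open>y\<close> put \<open>c = x \<bullet> y\<close> and \<open>n = \<parallel>x + y\<parallel>\<close>, so that \<open>1 + c = n\<^sup>2 / 2\<close>
  and \<open>\<parallel>x \<times> y\<parallel> \<le> n\<close>. Because each velocity is orthogonal to its own position,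
  \<open>x' \<bullet> y = x' \<bullet> (x + y)\<close>, hence \<open>c' = O(n V)\<close>, while \<open>(x \<times> y)' = O(V)\<close>. Both terms of the
  product-rule expansion of \<open>((x \<times> y)(x \<times> y)\<^sup>T / (1 + c))'\<close> are therefore \<open>O(n V / (1 + c)) = O(V / n)\<close>;
  the resulting constant is \<open>C = 16\<close>.\<close>

lemma bounded_bilinear_outer3: "bounded_bilinear outer3"
proof -
  have "bilinear outer3"
    unfolding bilinear_def linear_iff outer3_def by (auto simp: vec_eq_iff algebra_simps)
  then show ?thesis
    by (simp add: bilinear_conv_bounded_bilinear)
qed

lemma bounded_bilinear_cross3: "bounded_bilinear cross3"
  using bilinear_cross bilinear_conv_bounded_bilinear by blast

lemma outer3_mult_vector: "outer3 u w *v y = (w \<bullet> y) *\<^sub>R u"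
  unfolding outer3_def matrix_vector_mult_def inner_vec_def
  by (auto simp: vec_eq_iff sum_distrib_left algebra_simps)

lemma matnorm3_nonneg: "0 \<le> matnorm3 A"
  unfolding matnorm3_def by (intro onorm_pos_le matrix_vector_mul_bounded_linear)

lemma matnorm3_add_le: "matnorm3 (A + B) \<le> matnorm3 A + matnorm3 B"
  unfolding matnorm3_def matrix_vector_mult_add_rdistrib
  by (intro onorm_triangle matrix_vector_mul_bounded_linear)

lemma matnorm3_scaleR: "matnorm3 (r *\<^sub>R A) = \<bar>r\<bar> * matnorm3 A"
  unfolding matnorm3_def scaleR_matrix_vector_assoc[symmetric]
  by (intro onorm_scaleR matrix_vector_mul_bounded_linear)

lemma matnorm3_diff_le: "matnorm3 (A - B) \<le> matnorm3 A + matnorm3 B"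
  using matnorm3_add_le[of A "(-1) *\<^sub>R B"] matnorm3_scaleR[of "-1" B] by simp

lemma matnorm3_outer3_le: "matnorm3 (outer3 u w) \<le> norm u * norm w"
  unfolding matnorm3_def
proof (rule onorm_le)
  fix y
  have "norm (outer3 u w *v y) = \<bar>w \<bullet> y\<bar> * norm u"
    by (simp add: outer3_mult_vector)
  also have "\<dots> \<le> norm w * norm y * norm u"
    by (intro mult_right_mono Cauchy_Schwarz_ineq2) simp
  finally show "norm (outer3 u w *v y) \<le> norm u * norm w * norm y"
    by (simp add: ac_simps)
qed

lemma norm_cross3_le: "norm (cross3 a b) \<le> norm a * norm b"
proof (rule power2_le_imp_le)
  show "(norm (cross3 a b))\<^sup>2 \<le> (norm a * norm b)\<^sup>2"
    using norm_cross_dot[of a b] by (metis le_add_same_cancel1 zero_le_power2)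
qed simp

definition Pmat_deriv :: "real^3 \<Rightarrow> real^3 \<Rightarrow> real^3 \<Rightarrow> real^3 \<Rightarrow> real^3^3" where
  "Pmat_deriv x y u w =
     (1 / (1 + x \<bullet> y)) *\<^sub>R
       (outer3 (cross3 x y) (cross3 x w + cross3 u y) + outer3 (cross3 x w + cross3 u y) (cross3 x y))
     - ((x \<bullet> w + u \<bullet> y) / (1 + x \<bullet> y)\<^sup>2) *\<^sub>R outer3 (cross3 x y) (cross3 x y)"

lemma has_vector_derivative_Pmat:
  fixes X Y :: "real \<Rightarrow> real^3"
  assumes X: "(X has_vector_derivative u) (at t within T)"
    and Y: "(Y has_vector_derivative w) (at t within T)"
    and nonzero: "1 + X t \<bullet> Y t \<noteq> 0"
  shows "((\<lambda>s. Pmat (X s) (Y s)) has_vector_derivative Pmat_deriv (X t) (Y t) u w) (at t within T)"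
proof -
  have "((\<lambda>s. X s \<bullet> Y s) has_vector_derivative X t \<bullet> w + u \<bullet> Y t) (at t within T)"
    using bounded_bilinear.has_vector_derivative[OF bounded_bilinear_inner X Y] .
  then have "((\<lambda>s. 1 + X s \<bullet> Y s) has_field_derivative X t \<bullet> w + u \<bullet> Y t) (at t within T)"
    by (auto intro!: derivative_eq_intros simp: has_real_derivative_iff_has_vector_derivative)
  from DERIV_inverse_fun[OF this nonzero]
  have scalar: "((\<lambda>s. 1 / (1 + X s \<bullet> Y s)) has_field_derivative
      - ((X t \<bullet> w + u \<bullet> Y t) / (1 + X t \<bullet> Y t)\<^sup>2)) (at t within T)"
    by (simp add: divide_inverse power2_eq_square)
  have cross: "((\<lambda>s. cross3 (X s) (Y s)) has_vector_derivative
      cross3 (X t) w + cross3 u (Y t)) (at t within T)"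
    using bounded_bilinear.has_vector_derivative[OF bounded_bilinear_cross3 X Y] .
  from has_vector_derivative_scaleR[OF scalar
      bounded_bilinear.has_vector_derivative[OF bounded_bilinear_outer3 cross cross]]
  show ?thesis
    by (simp add: Pmat_def Pmat_deriv_def)
qed

lemma norm_add_unit_sq:
  assumes "norm x = 1" "norm y = 1"
  shows "(norm (x + y))\<^sup>2 = 2 * (1 + x \<bullet> y)"
  using assms dot_norm[of x y] by simp

lemma norm_cross3_le_norm_add:
  assumes x: "norm x = 1" and y: "norm y = 1"
  shows "norm (cross3 x y) \<le> norm (x + y)"
proof (rule power2_le_imp_le)
  have "\<bar>x \<bullet> y\<bar> \<le> 1"
    using Cauchy_Schwarz_ineq2[of x y] x y by simp
  then have "(norm (cross3 x y))\<^sup>2 = (1 - x \<bullet> y) * (1 + x \<bullet> y)"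
    using norm_cross_dot[of x y] x y by (simp add: algebra_simps power2_eq_square)
  also have "\<dots> \<le> 2 * (1 + x \<bullet> y)"
    using \<open>\<bar>x \<bullet> y\<bar> \<le> 1\<close> by (intro mult_right_mono) auto
  finally show "(norm (cross3 x y))\<^sup>2 \<le> (norm (x + y))\<^sup>2"
    using norm_add_unit_sq[OF x y] by simp
qed simp

lemma abs_inner_le_norm_add_if_orthogonal:
  assumes "u \<bullet> x = 0"
  shows "\<bar>u \<bullet> y\<bar> \<le> norm u * norm (x + y)"
proof -
  have "u \<bullet> y = u \<bullet> (x + y)"
    using assms by (simp add: inner_add_right)
  then show ?thesis
    by (simp add: Cauchy_Schwarz_ineq2)
qed

lemma norm_cross3_deriv_le:
  assumes "norm x = 1" "norm y = 1" "norm u \<le> V" "norm w \<le> V"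
  shows "norm (cross3 x w + cross3 u y) \<le> 2 * V"
proof -
  have "norm (cross3 x w + cross3 u y) \<le> norm x * norm w + norm u * norm y"
    by (intro norm_triangle_le add_mono norm_cross3_le)
  then show ?thesis
    using assms by simp
qed

lemma abs_inner_deriv_le:
  assumes "norm x = 1" "norm y = 1" "u \<bullet> x = 0" "w \<bullet> y = 0" "norm u \<le> V" "norm w \<le> V"
  shows "\<bar>x \<bullet> w + u \<bullet> y\<bar> \<le> 2 * V * norm (x + y)"
proof -
  have "\<bar>x \<bullet> w\<bar> \<le> norm w * norm (x + y)"
    using abs_inner_le_norm_add_if_orthogonal[OF \<open>w \<bullet> y = 0\<close>, of x]
    by (simp add: inner_commute add.commute)
  moreover have "\<bar>u \<bullet> y\<bar> \<le> norm u * norm (x + y)"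
    using abs_inner_le_norm_add_if_orthogonal[OF \<open>u \<bullet> x = 0\<close>] .
  moreover have "norm w * norm (x + y) \<le> V * norm (x + y)" "norm u * norm (x + y) \<le> V * norm (x + y)"
    using assms by (simp_all add: mult_right_mono)
  ultimately show ?thesis
    by linarith
qed

lemma matnorm3_Pmat_deriv_le:
  assumes x: "norm x = 1" and y: "norm y = 1"
    and ux: "u \<bullet> x = 0" and wy: "w \<bullet> y = 0"
    and u: "norm u \<le> V" and w: "norm w \<le> V"
    and nonantipodal: "x + y \<noteq> 0"
  shows "matnorm3 (Pmat_deriv x y u w) \<le> 16 / norm (x + y) * V"
proof -
  define n where "n = norm (x + y)"
  define p where "p = cross3 x y"
  define p' where "p' = cross3 x w + cross3 u y"
  have n: "n > 0"
    using nonantipodal by (simp add: n_def)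
  have one_plus_inner: "1 + x \<bullet> y = n\<^sup>2 / 2"
    using norm_add_unit_sq[OF x y] by (simp add: n_def)
  have V: "0 \<le> V"
    using norm_ge_zero u by (rule order_trans)
  have p: "norm p \<le> n"
    unfolding p_def n_def using x y by (rule norm_cross3_le_norm_add)
  have p': "norm p' \<le> 2 * V"
    unfolding p'_def using x y u w by (rule norm_cross3_deriv_le)
  have inner_deriv: "\<bar>x \<bullet> w + u \<bullet> y\<bar> \<le> 2 * V * n"
    unfolding n_def using x y ux wy u w by (rule abs_inner_deriv_le)
  have first: "matnorm3 ((1 / (1 + x \<bullet> y)) *\<^sub>R (outer3 p p' + outer3 p' p)) \<le> 8 / n * V"
  proof -
    have "matnorm3 ((1 / (1 + x \<bullet> y)) *\<^sub>R (outer3 p p' + outer3 p' p))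
        = 2 / n\<^sup>2 * matnorm3 (outer3 p p' + outer3 p' p)"
      by (simp add: matnorm3_scaleR one_plus_inner)
    also have "\<dots> \<le> 2 / n\<^sup>2 * (matnorm3 (outer3 p p') + matnorm3 (outer3 p' p))"
      by (intro mult_left_mono matnorm3_add_le) simp
    also have "\<dots> \<le> 2 / n\<^sup>2 * (norm p * norm p' + norm p' * norm p)"
      by (intro mult_left_mono add_mono matnorm3_outer3_le) simp
    also have "\<dots> \<le> 2 / n\<^sup>2 * (n * (2 * V) + (2 * V) * n)"
      using p p' n V by (intro mult_left_mono add_mono mult_mono) auto
    also have "\<dots> = 8 / n * V"
      using n by (simp add: field_simps power2_eq_square)
    finally show ?thesis .
  qed
  have second: "matnorm3 (((x \<bullet> w + u \<bullet> y) / (1 + x \<bullet> y)\<^sup>2) *\<^sub>R outer3 p p) \<le> 8 / n * V"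
  proof -
    have "matnorm3 (((x \<bullet> w + u \<bullet> y) / (1 + x \<bullet> y)\<^sup>2) *\<^sub>R outer3 p p)
        = \<bar>x \<bullet> w + u \<bullet> y\<bar> / (n\<^sup>2 / 2)\<^sup>2 * matnorm3 (outer3 p p)"
      by (simp add: matnorm3_scaleR one_plus_inner abs_divide)
    also have "\<dots> \<le> (2 * V * n) / (n\<^sup>2 / 2)\<^sup>2 * (norm p * norm p)"
      using inner_deriv by (intro mult_mono divide_right_mono matnorm3_outer3_le) (auto simp: matnorm3_nonneg)
    also have "\<dots> \<le> (2 * V * n) / (n\<^sup>2 / 2)\<^sup>2 * (n * n)"
      using p n V by (intro mult_left_mono mult_mono) auto
    also have "\<dots> = 8 / n * V"
      using n by (simp add: field_simps power2_eq_square)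
    finally show ?thesis .
  qed
  have "matnorm3 (Pmat_deriv x y u w) \<le> 8 / n * V + 8 / n * V"
    unfolding Pmat_deriv_def p_def[symmetric] p'_def[symmetric]
    using matnorm3_diff_le first second by (rule order_trans[OF _ add_mono])
  then show ?thesis
    by (simp add: n_def)
qed

lemma at_within_interval_nontrivial:
  fixes T :: "real set"
  assumes "is_interval T" "a \<in> T" "b \<in> T" "a \<noteq> b" "t \<in> T"
  shows "at t within T \<noteq> bot"
proof -
  have "t islimpt T"
    using assms by (intro connected_imp_perfect is_interval_connected) auto
  then show ?thesis
    by (simp add: trivial_limit_within)
qed

theorem lemmaB1:
  "\<exists>C>0. \<forall>(N::nat) (x::nat \<Rightarrow> real \<Rightarrow> real^3) (v::nat \<Rightarrow> real \<Rightarrow> real^3)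
      (T::real set) (Vmax::real) i j t.
      is_interval T \<and> (\<exists>a b. a < b \<and> a \<in> T \<and> b \<in> T) \<and> 0 \<le> Vmax \<and>
      (\<forall>k\<in>{1..N}. \<forall>s\<in>T. (x k has_vector_derivative v k s) (at s within T)) \<and>
      (\<forall>k\<in>{1..N}. \<forall>s\<in>T. norm (x k s) = 1 \<and> v k s \<bullet> x k s = 0 \<and> norm (v k s) \<le> Vmax) \<and>
      (\<forall>k\<in>{1..N}. \<forall>l\<in>{1..N}. \<forall>s\<in>T. x k s + x l s \<noteq> 0) \<and>
      i \<in> {1..N} \<and> j \<in> {1..N} \<and> t \<in> T
      \<longrightarrow> (\<exists>D. ((\<lambda>s. Pmat (x i s) (x j s)) has_vector_derivative D) (at t within T)) \<and>
          (\<forall>D. ((\<lambda>s. Pmat (x i s) (x j s)) has_vector_derivative D) (at t within T)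
               \<longrightarrow> matnorm3 D \<le> C / norm (x i t + x j t) * Vmax)"
proof -
  have "(\<exists>D. ((\<lambda>s. Pmat (x i s) (x j s)) has_vector_derivative D) (at t within T)) \<and>
        (\<forall>D. ((\<lambda>s. Pmat (x i s) (x j s)) has_vector_derivative D) (at t within T)
             \<longrightarrow> matnorm3 D \<le> 16 / norm (x i t + x j t) * Vmax)"
    if T: "is_interval T" "a < b" "a \<in> T" "b \<in> T" "t \<in> T"
      and deriv: "\<forall>k\<in>{1..N}. \<forall>s\<in>T. (x k has_vector_derivative v k s) (at s within T)"
      and tangent: "\<forall>k\<in>{1..N}. \<forall>s\<in>T. norm (x k s) = 1 \<and> v k s \<bullet> x k s = 0 \<and> norm (v k s) \<le> Vmax"
      and nonantipodal: "\<forall>k\<in>{1..N}. \<forall>l\<in>{1..N}. \<forall>s\<in>T. x k s + x l s \<noteq> 0"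
      and ij: "i \<in> {1..N}" "j \<in> {1..N}"
    for N x v T Vmax i j t a b
  proof -
    have "1 + x i t \<bullet> x j t \<noteq> 0"
      using norm_add_unit_sq[of "x i t" "x j t"] tangent nonantipodal ij T by force
    then have "((\<lambda>s. Pmat (x i s) (x j s)) has_vector_derivative
        Pmat_deriv (x i t) (x j t) (v i t) (v j t)) (at t within T)"
      using deriv ij T by (intro has_vector_derivative_Pmat) auto
    moreover have "matnorm3 (Pmat_deriv (x i t) (x j t) (v i t) (v j t))
        \<le> 16 / norm (x i t + x j t) * Vmax"
      using tangent nonantipodal ij T by (intro matnorm3_Pmat_deriv_le) auto
    moreover have "at t within T \<noteq> bot"
      using T by (intro at_within_interval_nontrivial[of T a b]) auto
    ultimately show ?thesis
      using vector_derivative_unique_within by blast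
  qed
  then show ?thesis
    by (intro exI[of _ 16] conjI) (simp, blast)
qed

end
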